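(* Let $\Phi,\Psi$ be complementary $N$-functions both satisfying the $\Delta_2^0$-condition and let $\varphi=\{\varphi_k\}_{k=0}^\infty$, $\psi=\{\psi_k\}_{k=0}^\infty$ be weight sequences in $\mathcal{W}$. There exists a constant $C>0$ depending only on $\Phi,\Psi,\varphi,\psi$ such that for every $a\in W\cap F\ell_{\varphi,\psi}^{\Phi,\Psi}$, every $n\in\mathbb{N}$ and every $j\in\{0,\dots,n\}$, \[ \|Q_nT(a)\Delta_j\|_{\mathcal{B}(\ell^\Psi(\mathbb{Z}_+))}\le C\,\frac{\|a-a^{(n-j)}\|_{F\ell_{\varphi,\psi}^{\Phi,\Psi}}}{\psi_{n-j+1}}, \qquad \|\Delta_jT(a)Q_n\|_{\mathcal{B}(\ell^\Psi(\mathbb{Z}_+))}\le C\,\frac{\|a-a^{(n-j)}\|_{F\ell_{\varphi,\psi}^{\Phi,\Psi}}}{\varphi_{n-j+1}}. \]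
   Context: $\mathbb{T}$ is the unit circle; $f_k$ denote Fourier coefficients of $f\in L^1(\mathbb{T})$. $W$ is the Wiener algebra of $a(t)=\sum_ka_kt^k$ with $\sum_k|a_k|<\infty$. Complementary $N$-functions: for $p:[0,\infty)\to[0,\infty)$ right-continuous non-decreasing with $p(0)=0$, $p(t)>0$ for $t>0$, $p(t)\to\infty$, and $q(s)=\sup\{t:p(t)\le s\}$, set $\Phi(x)=\int_0^xp$, $\Psi(x)=\int_0^xq$. $\Delta_2^0$-condition: $\limsup_{x\to0}\Phi(2x)/\Phi(x)<\infty$. $\mathcal{W}$: sequences $\{\nu_k\}_{k\ge0}$ of positive numbers with $\nu_0=1$, non-decreasing, and $\nu_{2k}\le C_\nu\nu_k$ ($k\in\mathbb{N}$) for some constant $C_\nu$. For $\mathbb{I}\in\{\mathbb{N},\mathbb{Z}_+\}$, an $N$-function $\Theta$ and a weight sequence $w$, $\ell^\Theta_w(\mathbb{I})$ is the space of complex sequences $(c_k)_{k\in\mathbb{I}}$ with $\sum_k\Theta(|c_k|w_k/\lambda)<\infty$ for some $\lambda>0$, normed by $\|c\|=\inf\{\lambda>0:\sum_k\Theta(|c_k|w_k/\lambda)\le1\}$; $\ell^\Theta(\mathbb{I})$ is the case $w_k\equiv1$. $F\ell_{\varphi,\psi}^{\Phi,\Psi}$ is the set of $a\in L^1(\mathbb{T})$ with $\sum_{k\ge1}\Phi(|a_{-k}|\varphi_k)+\sum_{k\ge0}\Psi(|a_k|\psi_k)<\infty$, normed by $\|a\|_{F\ell_{\varphi,\psi}^{\Phi,\Psi}}=\|\{a_{-k}\}_{k\in\mathbb{N}}\|_{\ell^\Phi_\varphi(\mathbb{N})}+\|\{a_k\}_{k\in\mathbb{Z}_+}\|_{\ell^\Psi_\psi(\mathbb{Z}_+)}$.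 For $m\in\mathbb{Z}_+$, $a^{(m)}(t)=\sum_{k=-m}^ma_kt^k$. $T(a)$ is the Toeplitz operator on sequences $(c_k)_{k\ge0}$ with matrix $(a_{j-k})_{j,k\ge0}$. $P_n$ maps $(c_k)_{k\ge0}$ to $(c_0,\dots,c_n,0,0,\dots)$, $Q_n=I-P_n$, $\Delta_0=P_0$, $\Delta_j=P_j-P_{j-1}$. $\mathcal{B}(X)$ is the algebra of bounded operators on $X$ with the operator norm. *)

theory Defs
  imports "HOL-Analysis.Analysis" "HOL-Library.Liminf_Limsup"
begin

definition admissible_density :: "(real \<Rightarrow> real) \<Rightarrow> bool" where
  "admissible_density p \<longleftrightarrow>
     p 0 = 0 \<and>
     (\<forall>t>0. p t > 0) \<and>
     mono_on {0..} p \<and>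
     (\<forall>t\<ge>0. continuous (at_right t) p) \<and>
     filterlim p at_top at_top"

definition right_inverse :: "(real \<Rightarrow> real) \<Rightarrow> real \<Rightarrow> real" where
  "right_inverse p s = Sup {t. t \<ge> 0 \<and> p t \<le> s}"

definition Nfun_of :: "(real \<Rightarrow> real) \<Rightarrow> real \<Rightarrow> real" where
  "Nfun_of p x = integral {0..x} p"

definition complementary_Nfunctions ::
  "(real \<Rightarrow> real) \<Rightarrow> (real \<Rightarrow> real) \<Rightarrow> bool" where
  "complementary_Nfunctions \<Phi> \<Psi> \<longleftrightarrow>
     (\<exists>p. admissible_density p \<and> \<Phi> = Nfun_of p \<and> \<Psi> = Nfun_of (right_inverse p))"

definition Delta2_zero :: "(real \<Rightarrow> real) \<Rightarrow> bool" where
  "Delta2_zero \<Phi> \<longleftrightarrow> Limsup (at_right 0) (\<lambda>x. ereal (\<Phi> (2 * x) / \<Phi> x)) < \<infinity>"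

definition weight_class :: "(nat \<Rightarrow> real) \<Rightarrow> bool" where
  "weight_class \<nu> \<longleftrightarrow>
     (\<forall>k. \<nu> k > 0) \<and> \<nu> 0 = 1 \<and> mono \<nu> \<and>
     (\<exists>C. \<forall>k\<ge>1. \<nu> (2 * k) \<le> C * \<nu> k)"

definition orlicz_space ::
  "(real \<Rightarrow> real) \<Rightarrow> nat set \<Rightarrow> (nat \<Rightarrow> real) \<Rightarrow> (nat \<Rightarrow> complex) \<Rightarrow> bool" where
  "orlicz_space \<Theta> I w c \<longleftrightarrow>
     (\<exists>r>0. (\<lambda>k. \<Theta> (cmod (c k) * w k / r)) summable_on I)"

definition orlicz_norm ::
  "(real \<Rightarrow> real) \<Rightarrow> nat set \<Rightarrow> (nat \<Rightarrow> real) \<Rightarrow> (nat \<Rightarrow> complex) \<Rightarrow> real" where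
  "orlicz_norm \<Theta> I w c =
     Inf {r. r > 0 \<and> (\<lambda>k. \<Theta> (cmod (c k) * w k / r)) summable_on I \<and>
              (\<Sum>\<^sub>\<infinity>k\<in>I. \<Theta> (cmod (c k) * w k / r)) \<le> 1}"

abbreviation ellTheta :: "(real \<Rightarrow> real) \<Rightarrow> (nat \<Rightarrow> complex) \<Rightarrow> bool" where
  "ellTheta \<Theta> c \<equiv> orlicz_space \<Theta> UNIV (\<lambda>_. 1) c"

abbreviation ellTheta_norm :: "(real \<Rightarrow> real) \<Rightarrow> (nat \<Rightarrow> complex) \<Rightarrow> real" where
  "ellTheta_norm \<Theta> c \<equiv> orlicz_norm \<Theta> UNIV (\<lambda>_. 1) c"

definition wiener :: "(int \<Rightarrow> complex) \<Rightarrow> bool" where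
  "wiener a \<longleftrightarrow> (\<lambda>k. cmod (a k)) summable_on UNIV"

definition Fl_space ::
  "(real \<Rightarrow> real) \<Rightarrow> (real \<Rightarrow> real) \<Rightarrow> (nat \<Rightarrow> real) \<Rightarrow> (nat \<Rightarrow> real)
   \<Rightarrow> (int \<Rightarrow> complex) \<Rightarrow> bool" where
  "Fl_space \<Phi> \<Psi> \<phi> \<psi> a \<longleftrightarrow>
     (\<lambda>k. \<Phi> (cmod (a (- int k)) * \<phi> k)) summable_on {1..} \<and>
     (\<lambda>k. \<Psi> (cmod (a (int k)) * \<psi> k)) summable_on UNIV"

definition Fl_norm ::
  "(real \<Rightarrow> real) \<Rightarrow> (real \<Rightarrow> real) \<Rightarrow> (nat \<Rightarrow> real) \<Rightarrow> (nat \<Rightarrow> real)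
   \<Rightarrow> (int \<Rightarrow> complex) \<Rightarrow> real" where
  "Fl_norm \<Phi> \<Psi> \<phi> \<psi> a =
     orlicz_norm \<Phi> {1..} \<phi> (\<lambda>k. a (- int k)) + orlicz_norm \<Psi> UNIV \<psi> (\<lambda>k. a (int k))"

definition trunc_symbol :: "nat \<Rightarrow> (int \<Rightarrow> complex) \<Rightarrow> int \<Rightarrow> complex" where
  "trunc_symbol m a k = (if \<bar>k\<bar> \<le> int m then a k else 0)"

definition toeplitz :: "(int \<Rightarrow> complex) \<Rightarrow> (nat \<Rightarrow> complex) \<Rightarrow> nat \<Rightarrow> complex" where
  "toeplitz a c j = (\<Sum>k. a (int j - int k) * c k)"

definition Pn :: "nat \<Rightarrow> (nat \<Rightarrow> complex) \<Rightarrow> nat \<Rightarrow> complex" where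
  "Pn n c k = (if k \<le> n then c k else 0)"

definition Qn :: "nat \<Rightarrow> (nat \<Rightarrow> complex) \<Rightarrow> nat \<Rightarrow> complex" where
  "Qn n c = c - Pn n c"

definition Delta :: "nat \<Rightarrow> (nat \<Rightarrow> complex) \<Rightarrow> nat \<Rightarrow> complex" where
  "Delta j c = (if j = 0 then Pn 0 c else Pn j c - Pn (j - 1) c)"

end

theory Submission
  imports Defs
begin

text \<open>
  Both operators have rank at most one: \<open>Q\<^sub>n T(a) \<Delta>\<^sub>j x\<close> is \<open>x\<^sub>j\<close> times the tail
  \<open>(a\<^sub>i\<^sub>-\<^sub>j)\<^sub>i\<^sub>>\<^sub>n\<close> of the \<open>j\<close>-th column, and \<open>\<Delta>\<^sub>j T(a) Q\<^sub>n x\<close> is the single entry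
  \<open>z = \<Sum>\<^sub>k\<^sub>>\<^sub>n a\<^sub>j\<^sub>-\<^sub>k x\<^sub>k\<close> at position \<open>j\<close>.  Only coefficients \<open>a\<^sub>m\<close> with \<open>|m| > n - j\<close>
  occur, i.e. coefficients of \<open>b = a - a\<^sup>(\<^sup>n\<^sup>-\<^sup>j\<^sup>)\<close>, and at such indices the non-decreasing
  weights are at least their value at \<open>n - j + 1\<close>.  The column is dominated by a right shift
  of \<open>(b\<^sub>k \<psi>\<^sub>k)\<close> scaled by \<open>|x\<^sub>j| / \<psi>\<^sub>n\<^sub>-\<^sub>j\<^sub>+\<^sub>1\<close>, and \<open>|x\<^sub>j| \<le> M \<parallel>x\<parallel>\<close> because the sublevel
  set \<open>{\<Psi> \<le> 1}\<close> is bounded.  The entry \<open>z\<close> is bounded by a Hoelder inequality that follows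
  from the crude Young inequality \<open>u v \<le> 4 (\<Phi> u + \<Psi> v)\<close>, and \<open>\<parallel>z e\<^sub>j\<parallel> \<le> |z| / v\<^sub>0\<close>
  whenever \<open>\<Psi> v\<^sub>0 \<le> 1\<close>.
\<close>

lemma integral_mono_on_bounds:
  fixes f :: "real \<Rightarrow> real"
  assumes f: "mono_on {0..} f" and "0 \<le> y" "y \<le> x"
  shows "(x - y) * f y \<le> integral {y..x} f" and "integral {y..x} f \<le> (x - y) * f x"
proof -
  have int: "f integrable_on {y..x}"
    by (rule integrable_on_mono_on, rule mono_on_subset[OF f]) (use assms in auto)
  have "f y \<le> f t" "f t \<le> f x" if "t \<in> {y..x}" for t
    using that assms by (auto intro!: mono_onD[OF f])
  then show "(x - y) * f y \<le> integral {y..x} f" "integral {y..x} f \<le> (x - y) * f x"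
    using integral_le[OF integrable_const_ivl int, of "f y"]
      integral_le[OF int integrable_const_ivl, of "f x"] assms by auto
qed

lemma Nfun_of_split:
  fixes f :: "real \<Rightarrow> real"
  assumes f: "mono_on {0..} f" and "0 \<le> y" "y \<le> x"
  shows "Nfun_of f x = Nfun_of f y + integral {y..x} f"
proof -
  have "f integrable_on {0..x}"
    by (rule integrable_on_mono_on, rule mono_on_subset[OF f]) auto
  from Henstock_Kurzweil_Integration.integral_combine[OF assms(2,3) this] show ?thesis
    unfolding Nfun_of_def by simp
qed

definition orlicz_function :: "(real \<Rightarrow> real) \<Rightarrow> bool" where
  "orlicz_function \<Theta> \<longleftrightarrow> \<Theta> 0 = 0 \<and> (\<forall>x. 0 \<le> \<Theta> x) \<and> mono \<Theta> \<and>
     (\<forall>c u. 0 \<le> c \<longrightarrow> c \<le> 1 \<longrightarrow> 0 \<le> u \<longrightarrow> \<Theta> (c * u) \<le> c * \<Theta> u)"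

lemma
  assumes "orlicz_function \<Theta>"
  shows orlicz_function_zero: "\<Theta> 0 = 0"
    and orlicz_function_nonneg: "0 \<le> \<Theta> x"
    and orlicz_function_mono: "x \<le> y \<Longrightarrow> \<Theta> x \<le> \<Theta> y"
    and orlicz_function_scale: "0 \<le> c \<Longrightarrow> c \<le> 1 \<Longrightarrow> 0 \<le> u \<Longrightarrow> \<Theta> (c * u) \<le> c * \<Theta> u"
  using assms unfolding orlicz_function_def by (auto dest: monoD)

context
  fixes f :: "real \<Rightarrow> real"
  assumes f_mono: "mono_on {0..} f" and f_nonneg: "\<And>x. 0 \<le> x \<Longrightarrow> 0 \<le> f x"
begin

lemma Nfun_of_nonneg: "0 \<le> Nfun_of f x"
proof (cases "0 \<le> x")
  case True
  have "0 \<le> (x - 0) * f 0" using True f_nonneg[of 0] by simp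
  then show ?thesis
    using integral_mono_on_bounds(1)[OF f_mono order_refl True] unfolding Nfun_of_def by linarith
qed (simp add: Nfun_of_def)

lemma Nfun_of_ge:
  assumes "0 \<le> y" "y \<le> x"
  shows "(x - y) * f y \<le> Nfun_of f x"
  using Nfun_of_split[OF f_mono assms] integral_mono_on_bounds(1)[OF f_mono assms]
    Nfun_of_nonneg[of y] by linarith

lemma Nfun_of_le: "0 \<le> x \<Longrightarrow> Nfun_of f x \<le> x * f x"
  using integral_mono_on_bounds(2)[OF f_mono order_refl] unfolding Nfun_of_def by simp

lemma Nfun_of_zero: "Nfun_of f 0 = 0"
  using Nfun_of_le[of 0] Nfun_of_nonneg[of 0] by simp

lemma Nfun_of_mono: "mono (Nfun_of f)"
proof
  fix x y :: real assume "x \<le> y"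
  show "Nfun_of f x \<le> Nfun_of f y"
  proof (cases "0 \<le> x")
    case True
    have "0 \<le> (y - x) * f x" using f_nonneg[OF True] \<open>x \<le> y\<close> by simp
    then show ?thesis
      using Nfun_of_split[OF f_mono True \<open>x \<le> y\<close>] integral_mono_on_bounds(1)[OF f_mono True \<open>x \<le> y\<close>]
      by linarith
  next
    case False
    then show ?thesis using Nfun_of_nonneg[of y] by (simp add: Nfun_of_def)
  qed
qed

lemma Nfun_of_scale:
  assumes "0 \<le> c" "c \<le> 1" "0 \<le> u"
  shows "Nfun_of f (c * u) \<le> c * Nfun_of f u"
proof -
  have cu: "0 \<le> c * u" "c * u \<le> u"
    using assms by (auto simp: mult_left_le_one_le)
  have lower: "Nfun_of f (c * u) + (1 - c) * u * f (c * u) \<le> Nfun_of f u"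
    using Nfun_of_split[OF f_mono cu] integral_mono_on_bounds(1)[OF f_mono cu]
    by (simp add: algebra_simps)
  have "(1 - c) * Nfun_of f (c * u) \<le> (1 - c) * (c * u * f (c * u))"
    using Nfun_of_le[OF cu(1)] assms(2) by (intro mult_left_mono) auto
  with mult_left_mono[OF lower assms(1)] show ?thesis
    by (simp add: algebra_simps)
qed

lemma Nfun_of_le_one_imp_le:
  assumes "0 \<le> t\<^sub>0" "1 \<le> f t\<^sub>0" "Nfun_of f v \<le> 1"
  shows "v \<le> max 2 (2 * t\<^sub>0)"
proof (rule ccontr)
  assume "\<not> ?thesis"
  then have v: "2 < v" "t\<^sub>0 \<le> v / 2" by auto
  have "v / 2 * 1 \<le> v / 2 * f (v / 2)"
    using v assms(2) mono_onD[OF f_mono, of t\<^sub>0 "v / 2"] assms(1)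
    by (intro mult_left_mono) auto
  also have "\<dots> \<le> Nfun_of f v"
    using Nfun_of_ge[of "v / 2" v] v by simp
  finally show False using v assms(3) by simp
qed

lemma Nfun_of_le_one_near_zero: "\<exists>v>0. Nfun_of f v \<le> 1"
proof -
  define v where "v = 1 / (f 1 + 1)"
  have v: "0 < v" "v \<le> 1"
    using f_nonneg[of 1] by (auto simp: v_def field_simps)
  have "Nfun_of f v \<le> v * f v" by (rule Nfun_of_le) (use v in auto)
  also have "\<dots> \<le> v * f 1" using v by (intro mult_left_mono mono_onD[OF f_mono]) auto
  also have "\<dots> \<le> 1" using f_nonneg[of 1] by (simp add: v_def field_simps)
  finally show ?thesis using v by blast
qed

lemma orlicz_function_Nfun_of: "orlicz_function (Nfun_of f)"
  unfolding orlicz_function_def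
  using Nfun_of_zero Nfun_of_nonneg Nfun_of_mono Nfun_of_scale by blast

end

lemma admissible_density_nonneg: "admissible_density p \<Longrightarrow> 0 \<le> t \<Longrightarrow> 0 \<le> p t"
  unfolding admissible_density_def by (cases "t = 0") (auto simp: less_le)

lemma bdd_above_right_inverse_set:
  assumes "admissible_density p"
  shows "bdd_above {t. 0 \<le> t \<and> p t \<le> s}"
proof -
  have "filterlim p at_top at_top"
    using assms unfolding admissible_density_def by auto
  then obtain T where T: "\<And>t. T \<le> t \<Longrightarrow> s + 1 \<le> p t"
    by (auto simp: filterlim_at_top eventually_at_top_linorder)
  have "t \<le> T" if "p t \<le> s" for t
  proof (rule ccontr)
    assume "\<not> t \<le> T"
    then have "s + 1 \<le> p t" by (intro T) simp
    with that show False by simp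
  qed
  then show ?thesis by (auto simp: bdd_above_def)
qed

lemma right_inverse_ge:
  assumes "admissible_density p" "0 \<le> t" "p t \<le> s"
  shows "t \<le> right_inverse p s"
  unfolding right_inverse_def
  by (rule cSup_upper) (use assms bdd_above_right_inverse_set[OF assms(1)] in auto)

lemma right_inverse_nonneg:
  assumes "admissible_density p" "0 \<le> s"
  shows "0 \<le> right_inverse p s"
  by (rule right_inverse_ge) (use assms in \<open>auto simp: admissible_density_def\<close>)

lemma right_inverse_mono:
  assumes "admissible_density p"
  shows "mono_on {0..} (right_inverse p)"
proof (rule mono_onI)
  fix r s :: real assume "r \<in> {0..}" "r \<le> s"
  then show "right_inverse p r \<le> right_inverse p s"
    unfolding right_inverse_def
    by (intro cSup_subset_mono bdd_above_right_inverse_set[OF assms])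
      (use assms in \<open>auto simp: admissible_density_def\<close>)
qed

text \<open>If \<open>p(u/2) \<le> v/2\<close> then \<open>u/2 \<le> q(v/2)\<close>; combine with \<open>\<Phi> u \<ge> (u/2) p(u/2)\<close>
  and \<open>\<Psi> v \<ge> (v/2) q(v/2)\<close>.\<close>
lemma weak_young_inequality:
  assumes p: "admissible_density p" and "0 \<le> u" "0 \<le> v"
  shows "u * v \<le> 4 * (Nfun_of p u + Nfun_of (right_inverse p) v)"
proof -
  let ?q = "right_inverse p"
  have p_mono: "mono_on {0..} p" using p by (simp add: admissible_density_def)
  note p_nonneg = admissible_density_nonneg[OF p]
  note q_mono = right_inverse_mono[OF p] and q_nonneg = right_inverse_nonneg[OF p]
  have \<Phi>: "u / 2 * p (u / 2) \<le> Nfun_of p u" and \<Phi>0: "0 \<le> Nfun_of p u"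
    using Nfun_of_ge[OF p_mono p_nonneg, of "u / 2" u] Nfun_of_nonneg[OF p_mono p_nonneg] assms
    by auto
  have \<Psi>: "v / 2 * ?q (v / 2) \<le> Nfun_of ?q v" and \<Psi>0: "0 \<le> Nfun_of ?q v"
    using Nfun_of_ge[OF q_mono q_nonneg, of "v / 2" v] Nfun_of_nonneg[OF q_mono q_nonneg] assms
    by auto
  show ?thesis
  proof (cases "p (u / 2) \<le> v / 2")
    case True
    then have "u / 2 \<le> ?q (v / 2)" by (intro right_inverse_ge[OF p]) (use assms in auto)
    then have "v / 2 * (u / 2) \<le> v / 2 * ?q (v / 2)" using assms by (intro mult_left_mono) auto
    then show ?thesis using \<Psi> \<Phi>0 by (simp add: algebra_simps)
  next
    case False
    then have "u / 2 * (v / 2) \<le> u / 2 * p (u / 2)" using assms by (intro mult_left_mono) auto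
    then show ?thesis using \<Phi> \<Psi>0 by (simp add: algebra_simps)
  qed
qed

definition orlicz_radii ::
  "(real \<Rightarrow> real) \<Rightarrow> nat set \<Rightarrow> (nat \<Rightarrow> real) \<Rightarrow> (nat \<Rightarrow> complex) \<Rightarrow> real set" where
  "orlicz_radii \<Theta> I w c =
     {r. 0 < r \<and> (\<lambda>k. \<Theta> (cmod (c k) * w k / r)) summable_on I \<and>
         (\<Sum>\<^sub>\<infinity>k\<in>I. \<Theta> (cmod (c k) * w k / r)) \<le> 1}"

lemma orlicz_norm_eq_Inf_radii: "orlicz_norm \<Theta> I w c = Inf (orlicz_radii \<Theta> I w c)"
  unfolding orlicz_norm_def orlicz_radii_def by simp

lemma orlicz_radii_pos: "r \<in> orlicz_radii \<Theta> I w c \<Longrightarrow> 0 < r"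
  unfolding orlicz_radii_def by simp

lemma orlicz_space_if_radius: "r \<in> orlicz_radii \<Theta> I w c \<Longrightarrow> orlicz_space \<Theta> I w c"
  unfolding orlicz_radii_def orlicz_space_def by auto

lemma orlicz_norm_le_radius: "r \<in> orlicz_radii \<Theta> I w c \<Longrightarrow> orlicz_norm \<Theta> I w c \<le> r"
  unfolding orlicz_norm_eq_Inf_radii
  by (rule cInf_lower) (auto simp: bdd_below_def dest: orlicz_radii_pos intro!: exI[of _ 0])

lemma le_mult_cInf:
  fixes S :: "real set"
  assumes "S \<noteq> {}" "\<And>s. s \<in> S \<Longrightarrow> 0 \<le> s" "0 \<le> c" "\<And>s. s \<in> S \<Longrightarrow> t \<le> c * s"
  shows "t \<le> c * Inf S"
proof (cases "c = 0")
  case True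
  with assms show ?thesis by auto
next
  case False
  with assms have "t / c \<le> Inf S"
    by (intro cInf_greatest) (auto simp: divide_le_eq mult.commute)
  with False assms(3) show ?thesis by (simp add: divide_le_eq mult.commute)
qed

lemma le_mult_cInf_mult_cInf:
  fixes R S :: "real set"
  assumes R: "R \<noteq> {}" "\<And>r. r \<in> R \<Longrightarrow> 0 \<le> r" and S: "S \<noteq> {}" "\<And>s. s \<in> S \<Longrightarrow> 0 \<le> s"
    and "0 \<le> c" and le: "\<And>r s. r \<in> R \<Longrightarrow> s \<in> S \<Longrightarrow> t \<le> c * r * s"
  shows "t \<le> c * Inf R * Inf S"
proof (rule le_mult_cInf[OF S])
  show "0 \<le> c * Inf R" using R \<open>0 \<le> c\<close> by (simp add: cInf_greatest)
  fix s assume s: "s \<in> S"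
  have "t \<le> (c * s) * Inf R"
    using R S(2)[OF s] \<open>0 \<le> c\<close> le[OF _ s] by (intro le_mult_cInf) (simp_all add: mult_ac)
  then show "t \<le> c * Inf R * s" by (simp add: mult_ac)
qed

lemma orlicz_norm_nonneg: "orlicz_radii \<Theta> I w c \<noteq> {} \<Longrightarrow> 0 \<le> orlicz_norm \<Theta> I w c"
  unfolding orlicz_norm_eq_Inf_radii
  by (rule cInf_greatest) (auto dest: orlicz_radii_pos intro: less_imp_le)

lemma orlicz_radii_nonempty:
  assumes \<Theta>: "orlicz_function \<Theta>" and w: "\<And>k. k \<in> I \<Longrightarrow> 0 \<le> w k"
    and c: "orlicz_space \<Theta> I w c"
  shows "orlicz_radii \<Theta> I w c \<noteq> {}"
proof -
  obtain r where r: "0 < r" and sum: "(\<lambda>k. \<Theta> (cmod (c k) * w k / r)) summable_on I"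
    using c unfolding orlicz_space_def by blast
  define m where "m = max 1 (\<Sum>\<^sub>\<infinity>k\<in>I. \<Theta> (cmod (c k) * w k / r))"
  have m: "1 \<le> m" by (simp add: m_def)
  have le: "\<Theta> (cmod (c k) * w k / (r * m)) \<le> 1 / m * \<Theta> (cmod (c k) * w k / r)"
    if "k \<in> I" for k
    using orlicz_function_scale[OF \<Theta>, of "1 / m" "cmod (c k) * w k / r"] w[OF that] r m
    by (simp add: field_simps)
  have sum': "(\<lambda>k. 1 / m * \<Theta> (cmod (c k) * w k / r)) summable_on I"
    using sum by (rule summable_on_cmult_right)
  have sum_rm: "(\<lambda>k. \<Theta> (cmod (c k) * w k / (r * m))) summable_on I"
    using summable_on_comparison_test[OF sum' le] orlicz_function_nonneg[OF \<Theta>] by blast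
  have "(\<Sum>\<^sub>\<infinity>k\<in>I. \<Theta> (cmod (c k) * w k / (r * m)))
      \<le> (\<Sum>\<^sub>\<infinity>k\<in>I. 1 / m * \<Theta> (cmod (c k) * w k / r))"
    by (rule infsum_mono[OF sum_rm sum' le])
  also have "\<dots> = 1 / m * (\<Sum>\<^sub>\<infinity>k\<in>I. \<Theta> (cmod (c k) * w k / r))"
    by (rule infsum_cmult_right[OF sum])
  also have "\<dots> \<le> 1"
    using m by (simp add: m_def field_simps)
  finally have "r * m \<in> orlicz_radii \<Theta> I w c"
    using r m sum_rm unfolding orlicz_radii_def by simp
  then show ?thesis by blast
qed

lemma orlicz_space_dominated:
  assumes \<Theta>: "orlicz_function \<Theta>" and w: "\<And>k. k \<in> I \<Longrightarrow> 0 \<le> w k"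
    and d: "(\<lambda>k. \<Theta> (cmod (d k) * w k)) summable_on I"
    and le: "\<And>k. k \<in> I \<Longrightarrow> cmod (c k) \<le> cmod (d k)"
  shows "orlicz_space \<Theta> I w c"
proof -
  have "(\<lambda>k. \<Theta> (cmod (c k) * w k / 1)) summable_on I"
  proof (rule summable_on_comparison_test[OF d])
    fix k assume "k \<in> I"
    then show "\<Theta> (cmod (c k) * w k / 1) \<le> \<Theta> (cmod (d k) * w k)"
      using le w by (auto intro: orlicz_function_mono[OF \<Theta>] mult_right_mono)
  qed (rule orlicz_function_nonneg[OF \<Theta>])
  then show ?thesis unfolding orlicz_space_def by (intro exI[of _ 1]) simp
qed

lemma
  assumes "orlicz_function \<Theta>"
  shows orlicz_space_zero: "orlicz_space \<Theta> I w (\<lambda>_. 0)"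
    and orlicz_norm_zero: "orlicz_norm \<Theta> I w (\<lambda>_. 0) = 0"
proof -
  have radii: "orlicz_radii \<Theta> I w (\<lambda>_. 0) = {0<..}"
    using orlicz_function_zero[OF assms] unfolding orlicz_radii_def by auto
  then show "orlicz_space \<Theta> I w (\<lambda>_. 0)"
    using orlicz_space_if_radius[of 1] by auto
  show "orlicz_norm \<Theta> I w (\<lambda>_. 0) = 0"
    unfolding orlicz_norm_eq_Inf_radii radii by simp
qed

lemma has_sum_shift_right:
  fixes h :: "nat \<Rightarrow> 'a::{comm_monoid_add, topological_space}"
  assumes "(h has_sum S) A"
  shows "((\<lambda>i. if j \<le> i \<and> i - j \<in> A then h (i - j) else 0) has_sum S) UNIV"
proof -
  define g where "g i = (if j \<le> i \<and> i - j \<in> A then h (i - j) else 0)" for i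
  have "((g \<circ> (\<lambda>l. l + j)) has_sum S) A"
    using assms by (rule has_sum_cong[THEN iffD1, rotated]) (simp add: g_def)
  then have "(g has_sum S) ((\<lambda>l. l + j) ` A)"
    by (subst has_sum_reindex) (auto simp: inj_on_def)
  moreover have "g i = 0" if "i \<notin> (\<lambda>l. l + j) ` A" for i
    using that unfolding g_def by (auto simp: image_iff)
  ultimately have "(g has_sum S) UNIV"
    by (subst has_sum_cong_neutral[of UNIV "(\<lambda>l. l + j) ` A" g g, symmetric]) auto
  then show ?thesis unfolding g_def .
qed

lemma orlicz_radii_shift:
  assumes \<Theta>: "orlicz_function \<Theta>" and \<kappa>: "0 < \<kappa>" and r: "r \<in> orlicz_radii \<Theta> I w c"
    and outside: "\<And>i. \<not> (j \<le> i \<and> i - j \<in> I) \<Longrightarrow> y i = 0"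
    and inside: "\<And>i. j \<le> i \<Longrightarrow> i - j \<in> I \<Longrightarrow> cmod (y i) \<le> \<kappa> * (cmod (c (i - j)) * w (i - j))"
  shows "\<kappa> * r \<in> orlicz_radii \<Theta> UNIV (\<lambda>_. 1) y"
proof -
  define h where "h l = \<Theta> (cmod (c l) * w l / r)" for l
  define g where "g i = (if j \<le> i \<and> i - j \<in> I then h (i - j) else 0)" for i
  have r0: "0 < r" and h: "h summable_on I" "infsum h I \<le> 1"
    using r unfolding orlicz_radii_def h_def by auto
  have g: "(g has_sum infsum h I) UNIV"
    unfolding g_def by (rule has_sum_shift_right) (use h in simp)
  have le: "\<Theta> (cmod (y i) * 1 / (\<kappa> * r)) \<le> g i" for i
  proof (cases "j \<le> i \<and> i - j \<in> I")
    case True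
    then have "cmod (y i) / (\<kappa> * r) \<le> cmod (c (i - j)) * w (i - j) / r"
      using inside[of i] \<kappa> r0 by (simp add: divide_le_eq field_simps)
    then show ?thesis
      using True orlicz_function_mono[OF \<Theta>] by (simp add: g_def h_def)
  next
    case False
    then have "g i = 0" unfolding g_def by (simp only: if_not_P if_False)
    with False show ?thesis by (simp add: outside orlicz_function_zero[OF \<Theta>])
  qed
  have sum: "(\<lambda>i. \<Theta> (cmod (y i) * 1 / (\<kappa> * r))) summable_on UNIV"
    using summable_on_comparison_test[OF has_sum_imp_summable[OF g] le]
      orlicz_function_nonneg[OF \<Theta>] by blast
  have "(\<Sum>\<^sub>\<infinity>i. \<Theta> (cmod (y i) * 1 / (\<kappa> * r))) \<le> infsum h I"
    using infsum_mono[OF sum has_sum_imp_summable[OF g] le] g by (simp add: infsumI)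
  with h sum \<kappa> r0 show ?thesis
    unfolding orlicz_radii_def by simp
qed

lemma orlicz_norm_shift_le:
  assumes \<Theta>: "orlicz_function \<Theta>" and w: "\<And>k. k \<in> I \<Longrightarrow> 0 \<le> w k"
    and c: "orlicz_space \<Theta> I w c" and \<kappa>: "0 \<le> \<kappa>"
    and outside: "\<And>i. \<not> (j \<le> i \<and> i - j \<in> I) \<Longrightarrow> y i = 0"
    and inside: "\<And>i. j \<le> i \<Longrightarrow> i - j \<in> I \<Longrightarrow> cmod (y i) \<le> \<kappa> * (cmod (c (i - j)) * w (i - j))"
  shows "ellTheta \<Theta> y" and "ellTheta_norm \<Theta> y \<le> \<kappa> * orlicz_norm \<Theta> I w c"
proof -
  have R: "orlicz_radii \<Theta> I w c \<noteq> {}" by (rule orlicz_radii_nonempty[OF \<Theta> w c])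
  have "ellTheta \<Theta> y \<and> ellTheta_norm \<Theta> y \<le> \<kappa> * orlicz_norm \<Theta> I w c"
  proof (cases "\<kappa> = 0")
    case True
    have "y i = 0" for i
    proof (cases "j \<le> i \<and> i - j \<in> I")
      case True
      then show ?thesis using inside[of i] \<open>\<kappa> = 0\<close> by simp
    qed (rule outside)
    then have "y = (\<lambda>_. 0)" by auto
    then show ?thesis using orlicz_space_zero[OF \<Theta>] orlicz_norm_zero[OF \<Theta>] True by simp
  next
    case False
    with \<kappa> have radius: "\<kappa> * r \<in> orlicz_radii \<Theta> UNIV (\<lambda>_. 1) y"
      if "r \<in> orlicz_radii \<Theta> I w c" for r
      using orlicz_radii_shift[OF \<Theta> _ that outside inside] by simp
    then have "ellTheta_norm \<Theta> y \<le> \<kappa> * orlicz_norm \<Theta> I w c"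
      unfolding orlicz_norm_eq_Inf_radii[of \<Theta> I] using R \<kappa> orlicz_norm_le_radius
      by (intro le_mult_cInf) (auto dest: orlicz_radii_pos)
    with R radius show ?thesis using orlicz_space_if_radius by blast
  qed
  then show "ellTheta \<Theta> y" "ellTheta_norm \<Theta> y \<le> \<kappa> * orlicz_norm \<Theta> I w c" by auto
qed

lemma orlicz_norm_single:
  assumes \<Theta>: "orlicz_function \<Theta>" and v\<^sub>0: "0 < v\<^sub>0" "\<Theta> v\<^sub>0 \<le> 1"
  shows "ellTheta \<Theta> (\<lambda>k. if k = j then z else 0)"
    and "ellTheta_norm \<Theta> (\<lambda>k. if k = j then z else 0) \<le> cmod z / v\<^sub>0"
proof -
  let ?y = "\<lambda>k. if k = j then z else 0"
  have "ellTheta \<Theta> ?y \<and> ellTheta_norm \<Theta> ?y \<le> cmod z / v\<^sub>0"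
  proof (cases "z = 0")
    case True
    then have "?y = (\<lambda>_. 0)" by auto
    then show ?thesis using orlicz_space_zero[OF \<Theta>] orlicz_norm_zero[OF \<Theta>] v\<^sub>0 by simp
  next
    case False
    have "((\<lambda>k. \<Theta> (cmod (?y k) * 1 / (cmod z / v\<^sub>0))) has_sum \<Theta> v\<^sub>0) UNIV"
      by (rule has_sum_finite_neutralI[of "{j}"])
        (use False v\<^sub>0 orlicz_function_zero[OF \<Theta>] in auto)
    then have "cmod z / v\<^sub>0 \<in> orlicz_radii \<Theta> UNIV (\<lambda>_. 1) ?y"
      using False v\<^sub>0 unfolding orlicz_radii_def by (auto simp: infsumI has_sum_imp_summable)
    then show ?thesis using orlicz_space_if_radius orlicz_norm_le_radius by blast
  qed
  then show "ellTheta \<Theta> ?y" "ellTheta_norm \<Theta> ?y \<le> cmod z / v\<^sub>0" by auto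
qed

lemma cmod_le_orlicz_norm:
  assumes \<Theta>: "orlicz_function \<Theta>" and M: "\<And>v. \<Theta> v \<le> 1 \<Longrightarrow> v \<le> M"
    and x: "ellTheta \<Theta> x"
  shows "cmod (x j) \<le> M * ellTheta_norm \<Theta> x"
  unfolding orlicz_norm_eq_Inf_radii
proof (rule le_mult_cInf)
  show "orlicz_radii \<Theta> UNIV (\<lambda>_. 1) x \<noteq> {}"
    by (rule orlicz_radii_nonempty[OF \<Theta> _ x]) simp
  show "0 \<le> M" using M[of 0] orlicz_function_zero[OF \<Theta>] by simp
next
  fix s assume s: "s \<in> orlicz_radii \<Theta> UNIV (\<lambda>_. 1) x"
  then have s0: "0 < s" by (rule orlicz_radii_pos)
  have "\<Theta> (cmod (x j) * 1 / s) \<le> (\<Sum>\<^sub>\<infinity>k. \<Theta> (cmod (x k) * 1 / s))"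
    using finite_sum_le_infsum[of _ UNIV "{j}"] s orlicz_function_nonneg[OF \<Theta>]
    unfolding orlicz_radii_def by auto
  also have "\<dots> \<le> 1" using s unfolding orlicz_radii_def by simp
  finally have "cmod (x j) / s \<le> M" using M s0 by simp
  with s0 show "cmod (x j) \<le> M * s" by (simp add: divide_le_eq mult.commute)
  show "0 \<le> s" using s0 by simp
qed

lemma orlicz_hoelder:
  assumes young: "\<And>u v. 0 \<le> u \<Longrightarrow> 0 \<le> v \<Longrightarrow> u * v \<le> K * (\<Phi> u + \<Psi> v)" and K: "0 \<le> K"
    and r: "r \<in> orlicz_radii \<Phi> I (\<lambda>_. 1) c" and s: "s \<in> orlicz_radii \<Psi> I (\<lambda>_. 1) d"
  shows "(\<lambda>k. cmod (c k) * cmod (d k)) summable_on I"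
    and "(\<Sum>\<^sub>\<infinity>k\<in>I. cmod (c k) * cmod (d k)) \<le> 2 * K * r * s"
proof -
  define F where "F k = \<Phi> (cmod (c k) / r)" for k
  define G where "G k = \<Psi> (cmod (d k) / s)" for k
  have r0: "0 < r" and F: "F summable_on I" "infsum F I \<le> 1"
    using r unfolding orlicz_radii_def F_def by auto
  have s0: "0 < s" and G: "G summable_on I" "infsum G I \<le> 1"
    using s unfolding orlicz_radii_def G_def by auto
  have le: "cmod (c k) * cmod (d k) \<le> r * s * K * (F k + G k)" for k
  proof -
    have "cmod (c k) * cmod (d k) = r * s * ((cmod (c k) / r) * (cmod (d k) / s))"
      using r0 s0 by simp
    also have "\<dots> \<le> r * s * (K * (F k + G k))"
      using young[of "cmod (c k) / r" "cmod (d k) / s"] r0 s0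
      by (intro mult_left_mono) (auto simp: F_def G_def)
    finally show ?thesis by (simp add: mult.assoc)
  qed
  have FG: "(\<lambda>k. r * s * K * (F k + G k)) summable_on I"
    by (intro summable_on_cmult_right summable_on_add F G)
  show sum: "(\<lambda>k. cmod (c k) * cmod (d k)) summable_on I"
    by (rule summable_on_comparison_test[OF FG le]) simp
  have "(\<Sum>\<^sub>\<infinity>k\<in>I. cmod (c k) * cmod (d k)) \<le> (\<Sum>\<^sub>\<infinity>k\<in>I. r * s * K * (F k + G k))"
    by (rule infsum_mono[OF sum FG le])
  also have "\<dots> = r * s * K * (infsum F I + infsum G I)"
    using F G by (simp add: infsum_cmult_right summable_on_add infsum_add)
  also have "\<dots> \<le> r * s * K * 2"
    using F G r0 s0 K by (intro mult_left_mono) auto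
  finally show "(\<Sum>\<^sub>\<infinity>k\<in>I. cmod (c k) * cmod (d k)) \<le> 2 * K * r * s"
    by (simp add: algebra_simps)
qed

lemma cmod_suminf_le_orlicz_pairing:
  fixes t :: "nat \<Rightarrow> complex"
  assumes young: "\<And>u v. 0 \<le> u \<Longrightarrow> 0 \<le> v \<Longrightarrow> u * v \<le> 4 * (\<Phi> u + \<Psi> v)"
    and r: "r \<in> orlicz_radii \<Phi> UNIV (\<lambda>_. 1) c" and s: "s \<in> orlicz_radii \<Psi> UNIV (\<lambda>_. 1) d"
    and t: "\<And>k. norm (t k) \<le> cmod (c k) * cmod (d k) / w" and w: "0 < w"
  shows "cmod (suminf t) \<le> 8 / w * r * s"
proof -
  let ?h = "\<lambda>k. cmod (c k) * cmod (d k)"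
  note hoelder = orlicz_hoelder[OF young zero_le_numeral r s]
  have h: "?h sums infsum ?h UNIV"
    using has_sum_imp_sums[OF has_sum_infsum[OF hoelder(1)]] .
  have h_w: "summable (\<lambda>k. ?h k / w)"
    by (rule summable_divide[OF sums_summable[OF h]])
  have t_sum: "summable (\<lambda>k. norm (t k))"
    by (rule summable_comparison_test[OF _ h_w]) (use t in simp)
  have "cmod (suminf t) \<le> (\<Sum>k. norm (t k))"
    by (rule summable_norm[OF t_sum])
  also have "\<dots> \<le> (\<Sum>k. ?h k / w)"
    by (rule suminf_le[OF t t_sum h_w])
  also have "\<dots> = infsum ?h UNIV / w"
    using sums_unique[OF sums_divide[OF h]] by simp
  also have "\<dots> \<le> 8 * r * s / w"
    using hoelder(2) w by (simp add: divide_right_mono)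
  finally show ?thesis by simp
qed

lemma Qn_apply: "Qn n c i = (if i \<le> n then 0 else c i)"
  by (simp add: Qn_def Pn_def)

lemma Delta_eq_single: "Delta j c = (\<lambda>k. if k = j then c j else 0)"
  by (cases "j = 0") (auto simp: Delta_def Pn_def fun_eq_iff)

lemma toeplitz_Delta: "toeplitz a (Delta j x) i = a (int i - int j) * x j"
  unfolding toeplitz_def Delta_eq_single
  using sums_unique[OF sums_single[of j "\<lambda>k. a (int i - int k) * x k"]]
  by (simp add: if_distrib cong: if_cong)

lemma norm_Qn_toeplitz_Delta_le:
  fixes a b :: "int \<Rightarrow> complex" and x :: "nat \<Rightarrow> complex"
  assumes \<Psi>: "orlicz_function \<Psi>" and \<psi>: "\<And>k. 0 < \<psi> k" "mono \<psi>" and "j \<le> n"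
    and b: "orlicz_space \<Psi> UNIV \<psi> (\<lambda>k. b (int k))"
    and tail: "\<And>k::nat. n - j < k \<Longrightarrow> b (int k) = a (int k)"
  defines "y \<equiv> Qn n (toeplitz a (Delta j x))"
  shows "ellTheta \<Psi> y"
    and "ellTheta_norm \<Psi> y \<le> cmod (x j) / \<psi> (n - j + 1) * orlicz_norm \<Psi> UNIV \<psi> (\<lambda>k. b (int k))"
proof -
  have y: "y i = (if i \<le> n then 0 else a (int i - int j) * x j)" for i
    by (simp add: y_def Qn_apply toeplitz_Delta)
  have \<psi>0: "0 \<le> \<psi> k" for k using \<psi>(1)[of k] by simp
  have \<kappa>: "0 \<le> cmod (x j) / \<psi> (n - j + 1)" using \<psi>0 by simp
  have outside: "y i = 0" if "\<not> (j \<le> i \<and> i - j \<in> UNIV)" for i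
    using that \<open>j \<le> n\<close> by (simp add: y)
  have inside: "cmod (y i) \<le> cmod (x j) / \<psi> (n - j + 1) * (cmod (b (int (i - j))) * \<psi> (i - j))"
    if "j \<le> i" for i
  proof (cases "i \<le> n")
    case False
    then have "n - j < i - j" using \<open>j \<le> n\<close> by linarith
    then have "b (int (i - j)) = a (int i - int j)"
      using tail[of "i - j"] \<open>j \<le> i\<close> by (simp add: of_nat_diff)
    moreover have "\<psi> (n - j + 1) \<le> \<psi> (i - j)"
      using False \<open>j \<le> n\<close> by (intro monoD[OF \<psi>(2)]) simp
    ultimately show ?thesis
      using False \<psi>(1)[of "n - j + 1"]
      by (simp add: y norm_mult field_simps) (intro mult_left_mono mult_right_mono; simp)
  qed (use \<psi>0 \<kappa> in \<open>simp add: y\<close>)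
  show "ellTheta \<Psi> y"
    by (rule orlicz_norm_shift_le(1)[OF \<Psi> \<psi>0 b \<kappa> outside inside])
  show "ellTheta_norm \<Psi> y \<le> cmod (x j) / \<psi> (n - j + 1) * orlicz_norm \<Psi> UNIV \<psi> (\<lambda>k. b (int k))"
    by (rule orlicz_norm_shift_le(2)[OF \<Psi> \<psi>0 b \<kappa> outside inside])
qed

lemma cmod_toeplitz_Qn_le:
  fixes a b :: "int \<Rightarrow> complex"
  assumes young: "\<And>u v. 0 \<le> u \<Longrightarrow> 0 \<le> v \<Longrightarrow> u * v \<le> 4 * (\<Phi> u + \<Psi> v)"
    and \<Phi>: "orlicz_function \<Phi>" and \<Psi>: "orlicz_function \<Psi>"
    and \<phi>: "\<And>k. 0 < \<phi> k" "mono \<phi>" and "j \<le> n"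
    and b: "orlicz_space \<Phi> {1..} \<phi> (\<lambda>k. b (- int k))" and x: "ellTheta \<Psi> x"
    and tail: "\<And>k::nat. n - j < k \<Longrightarrow> b (- int k) = a (- int k)"
  shows "cmod (toeplitz a (Qn n x) j)
    \<le> 8 / \<phi> (n - j + 1) * orlicz_norm \<Phi> {1..} \<phi> (\<lambda>k. b (- int k)) * ellTheta_norm \<Psi> x"
proof -
  let ?w = "\<phi> (n - j + 1)"
  let ?RA = "orlicz_radii \<Phi> {1..} \<phi> (\<lambda>k. b (- int k))"
  let ?RB = "orlicz_radii \<Psi> UNIV (\<lambda>_. 1) x"
  define c where "c k = (if n < k then b (- int (k - j)) * of_real (\<phi> (k - j)) else 0)" for k
  define t where "t k = a (int j - int k) * Qn n x k" for k
  have w: "0 < ?w" by (rule \<phi>(1))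
  have RA: "?RA \<noteq> {}" using orlicz_radii_nonempty[OF \<Phi> _ b] \<phi>(1) less_imp_le by blast
  have RB: "?RB \<noteq> {}" using orlicz_radii_nonempty[OF \<Psi> _ x] by simp
  have radius_c: "r \<in> orlicz_radii \<Phi> UNIV (\<lambda>_. 1) c" if r: "r \<in> ?RA" for r
  proof -
    have "1 * r \<in> orlicz_radii \<Phi> UNIV (\<lambda>_. 1) c"
    proof (rule orlicz_radii_shift[OF \<Phi> zero_less_one r])
      fix i assume "\<not> (j \<le> i \<and> i - j \<in> {1..})"
      then show "c i = 0" using \<open>j \<le> n\<close> by (auto simp: c_def)
    next
      fix i show "cmod (c i) \<le> 1 * (cmod (b (- int (i - j))) * \<phi> (i - j))"
        using \<phi>(1)[of "i - j"] by (simp add: c_def norm_mult less_imp_le)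
    qed
    then show ?thesis by simp
  qed
  have t: "norm (t k) \<le> cmod (c k) * cmod (x k) / ?w" for k
  proof (cases "n < k")
    case True
    then have "n - j < k - j" using \<open>j \<le> n\<close> by linarith
    then have "a (int j - int k) = b (- int (k - j))"
      using tail[of "k - j"] \<open>j \<le> n\<close> True by (simp add: of_nat_diff)
    moreover have "?w \<le> \<phi> (k - j)"
      using True \<open>j \<le> n\<close> by (intro monoD[OF \<phi>(2)]) simp
    ultimately show ?thesis
      using True w \<phi>(1)[of "k - j"]
      by (simp add: t_def c_def Qn_apply norm_mult field_simps) (intro mult_left_mono mult_right_mono; simp)
  qed (simp add: t_def c_def Qn_apply)
  have bound: "cmod (toeplitz a (Qn n x) j) \<le> 8 / ?w * r * s" if "r \<in> ?RA" "s \<in> ?RB" for r s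
    unfolding toeplitz_def t_def[symmetric]
    by (rule cmod_suminf_le_orlicz_pairing[OF young radius_c[OF that(1)] that(2) t w])
  show ?thesis
    unfolding orlicz_norm_eq_Inf_radii using RA RB w bound
    by (intro le_mult_cInf_mult_cInf) (auto dest: orlicz_radii_pos)
qed

lemma norm_Delta_toeplitz_Qn_le:
  fixes a b :: "int \<Rightarrow> complex"
  assumes young: "\<And>u v. 0 \<le> u \<Longrightarrow> 0 \<le> v \<Longrightarrow> u * v \<le> 4 * (\<Phi> u + \<Psi> v)"
    and \<Phi>: "orlicz_function \<Phi>" and \<Psi>: "orlicz_function \<Psi>" and v\<^sub>0: "0 < v\<^sub>0" "\<Psi> v\<^sub>0 \<le> 1"
    and \<phi>: "\<And>k. 0 < \<phi> k" "mono \<phi>" and "j \<le> n"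
    and b: "orlicz_space \<Phi> {1..} \<phi> (\<lambda>k. b (- int k))" and x: "ellTheta \<Psi> x"
    and tail: "\<And>k::nat. n - j < k \<Longrightarrow> b (- int k) = a (- int k)"
  shows "ellTheta \<Psi> (Delta j (toeplitz a (Qn n x)))"
    and "ellTheta_norm \<Psi> (Delta j (toeplitz a (Qn n x)))
      \<le> 8 / v\<^sub>0 / \<phi> (n - j + 1) * orlicz_norm \<Phi> {1..} \<phi> (\<lambda>k. b (- int k)) * ellTheta_norm \<Psi> x"
proof -
  let ?z = "toeplitz a (Qn n x) j"
  show "ellTheta \<Psi> (Delta j (toeplitz a (Qn n x)))"
    unfolding Delta_eq_single by (rule orlicz_norm_single(1)[OF \<Psi> v\<^sub>0])
  have "ellTheta_norm \<Psi> (Delta j (toeplitz a (Qn n x))) \<le> cmod ?z / v\<^sub>0"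
    unfolding Delta_eq_single by (rule orlicz_norm_single(2)[OF \<Psi> v\<^sub>0])
  also have "\<dots> \<le> 8 / \<phi> (n - j + 1) * orlicz_norm \<Phi> {1..} \<phi> (\<lambda>k. b (- int k))
      * ellTheta_norm \<Psi> x / v\<^sub>0"
  proof (rule divide_right_mono)
    show "cmod ?z \<le> 8 / \<phi> (n - j + 1) * orlicz_norm \<Phi> {1..} \<phi> (\<lambda>k. b (- int k)) * ellTheta_norm \<Psi> x"
      using cmod_toeplitz_Qn_le[OF young \<Phi> \<Psi> \<phi> \<open>j \<le> n\<close> b x tail] by simp
  qed (use v\<^sub>0 in simp)
  finally show "ellTheta_norm \<Psi> (Delta j (toeplitz a (Qn n x)))
      \<le> 8 / v\<^sub>0 / \<phi> (n - j + 1) * orlicz_norm \<Phi> {1..} \<phi> (\<lambda>k. b (- int k)) * ellTheta_norm \<Psi> x"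
    by (simp add: field_simps)
qed

lemma toeplitz_tail_bounds:
  fixes a :: "int \<Rightarrow> complex" and x :: "nat \<Rightarrow> complex"
  assumes young: "\<And>u v. 0 \<le> u \<Longrightarrow> 0 \<le> v \<Longrightarrow> u * v \<le> 4 * (\<Phi> u + \<Psi> v)"
    and \<Phi>: "orlicz_function \<Phi>" and \<Psi>: "orlicz_function \<Psi>"
    and M: "\<And>v. \<Psi> v \<le> 1 \<Longrightarrow> v \<le> M" and v\<^sub>0: "0 < v\<^sub>0" "\<Psi> v\<^sub>0 \<le> 1"
    and C: "M \<le> C" "8 / v\<^sub>0 \<le> C"
    and \<phi>: "\<And>k. 0 < \<phi> k" "mono \<phi>" and \<psi>: "\<And>k. 0 < \<psi> k" "mono \<psi>"
    and a: "Fl_space \<Phi> \<Psi> \<phi> \<psi> a" and "j \<le> n" and x: "ellTheta \<Psi> x"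
  shows "ellTheta \<Psi> (Qn n (toeplitz a (Delta j x))) \<and>
        ellTheta_norm \<Psi> (Qn n (toeplitz a (Delta j x)))
          \<le> C * (Fl_norm \<Phi> \<Psi> \<phi> \<psi> (a - trunc_symbol (n - j) a) / \<psi> (n - j + 1))
             * ellTheta_norm \<Psi> x \<and>
        ellTheta \<Psi> (Delta j (toeplitz a (Qn n x))) \<and>
        ellTheta_norm \<Psi> (Delta j (toeplitz a (Qn n x)))
          \<le> C * (Fl_norm \<Phi> \<Psi> \<phi> \<psi> (a - trunc_symbol (n - j) a) / \<phi> (n - j + 1))
             * ellTheta_norm \<Psi> x"
proof -
  define b where "b = a - trunc_symbol (n - j) a"
  have b_le: "cmod (b k) \<le> cmod (a k)" for k by (simp add: b_def trunc_symbol_def)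
  have b_plus: "orlicz_space \<Psi> UNIV \<psi> (\<lambda>k. b (int k))"
    by (rule orlicz_space_dominated[OF \<Psi> _ _ b_le])
      (use a \<psi>(1) less_imp_le in \<open>auto simp: Fl_space_def\<close>)
  have b_minus: "orlicz_space \<Phi> {1..} \<phi> (\<lambda>k. b (- int k))"
    by (rule orlicz_space_dominated[OF \<Phi> _ _ b_le])
      (use a \<phi>(1) less_imp_le in \<open>auto simp: Fl_space_def\<close>)
  let ?A = "orlicz_norm \<Phi> {1..} \<phi> (\<lambda>k. b (- int k))"
  let ?D = "orlicz_norm \<Psi> UNIV \<psi> (\<lambda>k. b (int k))"
  let ?B = "ellTheta_norm \<Psi> x"
  have A: "0 \<le> ?A"
    by (rule orlicz_norm_nonneg, rule orlicz_radii_nonempty[OF \<Phi> _ b_minus])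
      (simp add: \<phi>(1) less_imp_le)
  have D: "0 \<le> ?D"
    by (rule orlicz_norm_nonneg, rule orlicz_radii_nonempty[OF \<Psi> _ b_plus])
      (simp add: \<psi>(1) less_imp_le)
  have B: "0 \<le> ?B"
    by (rule orlicz_norm_nonneg, rule orlicz_radii_nonempty[OF \<Psi> _ x]) simp
  have "0 < 8 / v\<^sub>0" using v\<^sub>0 by simp
  with C have C0: "0 \<le> C" by linarith
  have Fl: "Fl_norm \<Phi> \<Psi> \<phi> \<psi> (a - trunc_symbol (n - j) a) = ?A + ?D"
    unfolding Fl_norm_def b_def ..
  have tail_plus: "b (int k) = a (int k)" and tail_minus: "b (- int k) = a (- int k)"
    if "n - j < k" for k :: nat
    using that by (simp_all add: b_def trunc_symbol_def)
  have "cmod (x j) \<le> C * ?B"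
    using cmod_le_orlicz_norm[OF \<Psi> M x, of j] mult_right_mono[OF C(1) B] by linarith
  then have "cmod (x j) * ?D \<le> C * ?B * (?A + ?D)"
    using A B D C0 by (intro mult_mono) simp_all
  then have "cmod (x j) / \<psi> (n - j + 1) * ?D \<le> C * ((?A + ?D) / \<psi> (n - j + 1)) * ?B"
    using \<psi>(1)[of "n - j + 1"] by (simp add: field_simps)
  moreover have "8 / v\<^sub>0 * ?A * ?B \<le> C * (?A + ?D) * ?B"
    using C(2) A B D C0 by (intro mult_mono mult_right_mono) simp_all
  then have "8 / v\<^sub>0 / \<phi> (n - j + 1) * ?A * ?B \<le> C * ((?A + ?D) / \<phi> (n - j + 1)) * ?B"
    using \<phi>(1)[of "n - j + 1"] by (simp add: field_simps)
  moreover note norm_Qn_toeplitz_Delta_le[OF \<Psi> \<psi> \<open>j \<le> n\<close> b_plus tail_plus, of x]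
  moreover note norm_Delta_toeplitz_Qn_le[OF young \<Phi> \<Psi> v\<^sub>0 \<phi> \<open>j \<le> n\<close> b_minus x tail_minus]
  ultimately show ?thesis
    unfolding Fl by (meson order.trans)
qed

theorem lemma3p6:
  fixes \<Phi> \<Psi> :: "real \<Rightarrow> real" and \<phi> \<psi> :: "nat \<Rightarrow> real"
  assumes "complementary_Nfunctions \<Phi> \<Psi>"
    and "Delta2_zero \<Phi>" and "Delta2_zero \<Psi>"
    and "weight_class \<phi>" and "weight_class \<psi>"
  shows "\<exists>C>0. \<forall>a n j. wiener a \<and> Fl_space \<Phi> \<Psi> \<phi> \<psi> a \<and> n \<ge> 1 \<and> j \<le> n \<longrightarrow>
     (\<forall>x. ellTheta \<Psi> x \<longrightarrow>
        ellTheta \<Psi> (Qn n (toeplitz a (Delta j x))) \<and>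
        ellTheta_norm \<Psi> (Qn n (toeplitz a (Delta j x)))
          \<le> C * (Fl_norm \<Phi> \<Psi> \<phi> \<psi> (a - trunc_symbol (n - j) a) / \<psi> (n - j + 1))
             * ellTheta_norm \<Psi> x \<and>
        ellTheta \<Psi> (Delta j (toeplitz a (Qn n x))) \<and>
        ellTheta_norm \<Psi> (Delta j (toeplitz a (Qn n x)))
          \<le> C * (Fl_norm \<Phi> \<Psi> \<phi> \<psi> (a - trunc_symbol (n - j) a) / \<phi> (n - j + 1))
             * ellTheta_norm \<Psi> x)"
proof -
  obtain p where p: "admissible_density p" and \<Phi>: "\<Phi> = Nfun_of p"
    and \<Psi>: "\<Psi> = Nfun_of (right_inverse p)"
    using assms(1) unfolding complementary_Nfunctions_def by blast
  have p_mono: "mono_on {0..} p" using p by (simp add: admissible_density_def)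
  note p_nonneg = admissible_density_nonneg[OF p]
  note q_mono = right_inverse_mono[OF p] and q_nonneg = right_inverse_nonneg[OF p]
  have p1: "0 \<le> p 1" "1 \<le> right_inverse p (p 1)"
    using p_nonneg[of 1] right_inverse_ge[OF p, of 1 "p 1"] by simp_all
  have M: "v \<le> max 2 (2 * p 1)" if "\<Psi> v \<le> 1" for v
    using Nfun_of_le_one_imp_le[OF q_mono q_nonneg p1] that unfolding \<Psi> by simp
  obtain v\<^sub>0 where v\<^sub>0: "0 < v\<^sub>0" "\<Psi> v\<^sub>0 \<le> 1"
    using Nfun_of_le_one_near_zero[OF q_mono q_nonneg] unfolding \<Psi> by blast
  have \<phi>: "\<And>k. 0 < \<phi> k" "mono \<phi>" and \<psi>: "\<And>k. 0 < \<psi> k" "mono \<psi>"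
    using assms(4,5) unfolding weight_class_def by auto
  let ?C = "max 2 (2 * p 1) + 8 / v\<^sub>0"
  have C: "0 < ?C" using v\<^sub>0 by (simp add: add_pos_pos)
  have C_ge: "max 2 (2 * p 1) \<le> ?C" "8 / v\<^sub>0 \<le> ?C"
    using v\<^sub>0 by auto
  note bounds = toeplitz_tail_bounds[OF weak_young_inequality[OF p, folded \<Phi> \<Psi>]
      orlicz_function_Nfun_of[OF p_mono p_nonneg, folded \<Phi>]
      orlicz_function_Nfun_of[OF q_mono q_nonneg, folded \<Psi>] M v\<^sub>0 C_ge \<phi> \<psi>]
  show ?thesis
    by (intro exI[of _ ?C] conjI[OF C] allI impI bounds) simp_all
qed

end
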